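(* Let $n\ge2$ be an integer that is not a perfect square, and let $a,b$ be positive rational numbers with $a^2-nb^2=-1$. Put $u=a+b\sqrt n$ and for $k\ge1$ write $u^k=a_k+b_k\sqrt n$ with $a_k,b_k\in\mathbb Q$. Then $$\mathcal L\left(\frac1{u^2}\right)=\sum_{k=1}^{\infty}\left[\mathcal L\left(\frac{1}{n(b_{2k}/a)^2}\right)+\mathcal L\left(\frac{1}{(a_{2k+1}/a)^2}\right)\right].$$ Moreover, if $a,b\in\mathbb Z$ then $b_{2k}/a\in\mathbb Z$ and $a_{2k+1}/a\in\mathbb Z$ for all $k\ge1$.
   Context: $\mathcal L$ is the Rogers dilogarithm: for real $z\le1$, $\mathcal L(z)=\mathrm{Li}_2(z)+\tfrac12\log|z|\log(1-z)$, where $\mathrm{Li}_2(z)=\sum_{m\ge1}z^m/m^2$. *)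

theory Defs
  imports "HOL-Analysis.Analysis"
begin

text \<open>Dilogarithm by its power series (convergent for |z| \<le> 1, which covers
all arguments occurring in the statement).\<close>
definition Li2 :: "real \<Rightarrow> real" where
  "Li2 z = (\<Sum>m. z ^ (Suc m) / (real (Suc m))^2)"

definition rogers_L :: "real \<Rightarrow> real" where
  "rogers_L z = Li2 z + 1/2 * ln \<bar>z\<bar> * ln (1 - z)"

end

theory Submission
  imports Defs "HOL-Real_Asymp.Real_Asymp"
begin

(* Put q = u^2, x_m = q^(m-1) (q-1) / (q^m - 1) and y_m = (q-1) / (q^m - 1).  Abel's five-term
   relation L(xy) = L(x) + L(y) - L(x(1-y)/(1-xy)) - L(y(1-x)/(1-xy)) sends (x_m, y_m) to
   (x_(m+1), y_(m+1)), so the terms L(x_m y_m) telescope.  As m tends to infinity the pair tends to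
   ((q-1)/q, 0), and the reflection formula L(x) + L(1-x) = const evaluates the sum from m = 2 as
   L(1/q).

   On the arithmetic side a - b sqrt n = -1/u, so a = (u - 1/u)/2, while b_m sqrt n and a_m are
   (u^m -+ (-1/u)^m)/2; for m even resp. odd both equal (u^m - u^-m)/2, and the squares of their
   ratios to a are exactly 1/(x_m y_m).  Integrality follows from the recursion for (a_k, b_k),
   along which a divides b_2k and a_(2k+1). *)

section \<open>Derivative and boundary behaviour of the Rogers dilogarithm\<close>

lemma summable_Li2_series:
  fixes z :: real
  assumes "\<bar>z\<bar> < 1"
  shows "summable (\<lambda>n. 1 / (real n)^2 * z^n)"
proof (rule summable_comparison_test[where g="\<lambda>n. \<bar>z\<bar>^n"])
  show "summable (\<lambda>n. \<bar>z\<bar>^n)"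
    using assms by (intro summable_geometric) simp
  have "1 / (real n)^2 * \<bar>z\<bar>^n \<le> 1 * \<bar>z\<bar>^n" for n
    by (intro mult_right_mono) (cases n, simp_all add: divide_le_eq)
  then show "\<exists>N. \<forall>n\<ge>N. norm (1 / (real n)^2 * z^n) \<le> \<bar>z\<bar>^n"
    by (simp add: abs_mult power_abs)
qed

text \<open>The reindexed series gains an n = 0 term, which vanishes since 1 / 0 = 0.\<close>
lemma Li2_eq_suminf:
  fixes z :: real
  assumes "\<bar>z\<bar> < 1"
  shows "Li2 z = (\<Sum>n. 1 / (real n)^2 * z^n)"
proof -
  have "(\<lambda>n. 1 / (real n)^2 * z^n) sums (\<Sum>n. 1 / (real n)^2 * z^n)"
    using summable_Li2_series[OF assms] by (rule summable_sums)
  then have "(\<lambda>m. 1 / (real (Suc m))^2 * z^(Suc m)) sums (\<Sum>n. 1 / (real n)^2 * z^n)"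
    by (subst sums_Suc_iff) simp
  then show ?thesis
    unfolding Li2_def by (simp add: sums_iff)
qed

lemma Li2_0 [simp]: "Li2 0 = 0"
  unfolding Li2_def by simp

lemma has_real_derivative_Li2_series:
  fixes z :: real
  assumes "\<bar>z\<bar> < 1"
  shows "(Li2 has_real_derivative (\<Sum>n. diffs (\<lambda>n. 1 / (real n)^2) n * z^n)) (at z)"
proof (rule has_field_derivative_transform_within_open[where S="{-1<..<1}"])
  show "((\<lambda>z. \<Sum>n. 1 / (real n)^2 * z^n) has_real_derivative
      (\<Sum>n. diffs (\<lambda>n. 1 / (real n)^2) n * z^n)) (at z)"
    by (rule termdiffs_strong'[where K=1]) (use assms summable_Li2_series in auto)
  show "\<And>x. x \<in> {-1<..<1} \<Longrightarrow> (\<Sum>n. 1 / (real n)^2 * x^n) = Li2 x"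
    using Li2_eq_suminf by (auto simp: abs_less_iff)
qed (use assms in auto)

lemma isCont_Li2: "\<bar>z\<bar> < 1 \<Longrightarrow> isCont Li2 z"
  using has_real_derivative_Li2_series DERIV_isCont by blast

lemma has_real_derivative_Li2:
  fixes z :: real
  assumes "0 < z" "z < 1"
  shows "(Li2 has_real_derivative - ln (1 - z) / z) (at z)"
proof -
  have "(\<lambda>n. - ((-(-z))^n) / real n) sums ln (1 + (-z))"
    using assms by (intro ln_series') auto
  then have "(\<lambda>n. z^n / real n) sums (- ln (1 - z))"
    using sums_minus by fastforce
  then have "(\<lambda>n. z^(Suc n) / real (Suc n)) sums (- ln (1 - z))"
    by (subst sums_Suc_iff) simp
  then have "(\<lambda>n. z^(Suc n) / real (Suc n) / z) sums (- ln (1 - z) / z)"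
    by (rule sums_divide)
  moreover have "z^(Suc n) / real (Suc n) / z = diffs (\<lambda>n. 1 / (real n)^2) n * z^n" for n
    using assms unfolding diffs_def by (simp add: power2_eq_square)
  ultimately have "(\<Sum>n. diffs (\<lambda>n. 1 / (real n)^2) n * z^n) = - ln (1 - z) / z"
    by (simp add: sums_iff)
  with has_real_derivative_Li2_series[of z] assms show ?thesis
    by simp
qed

definition rogers_L_deriv :: "real \<Rightarrow> real" where
  "rogers_L_deriv t = - (ln (1 - t) / t + ln t / (1 - t)) / 2"

lemma has_real_derivative_rogers_L:
  assumes "0 < t" "t < 1"
  shows "(rogers_L has_real_derivative rogers_L_deriv t) (at t)"
proof (rule has_field_derivative_transform_within_open[where S="{0<..<1}"])
  have "((\<lambda>t. Li2 t + 1/2 * ln t * ln (1 - t)) has_real_derivative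
     (- ln (1 - t) / t + 1/2 * ((1/t) * ln (1 - t) + ln t * (- 1 / (1 - t))))) (at t)"
    using has_real_derivative_Li2[OF assms] assms
    by (auto intro!: derivative_eq_intros simp: mult.commute)
  also have "- ln (1 - t) / t + 1/2 * ((1/t) * ln (1 - t) + ln t * (- 1 / (1 - t)))
      = rogers_L_deriv t"
    unfolding rogers_L_deriv_def using assms by (simp add: field_simps)
  finally show "((\<lambda>t. Li2 t + 1/2 * ln t * ln (1 - t)) has_real_derivative rogers_L_deriv t) (at t)" .
  show "\<And>x. x \<in> {0<..<1} \<Longrightarrow> Li2 x + 1/2 * ln x * ln (1 - x) = rogers_L x"
    unfolding rogers_L_def by auto
qed (use assms in auto)

lemma isCont_rogers_L: "0 < t \<Longrightarrow> t < 1 \<Longrightarrow> isCont rogers_L t"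
  using has_real_derivative_rogers_L DERIV_isCont by blast

lemma rogers_L_tendsto_at_right_0: "(rogers_L \<longlongrightarrow> 0) (at_right 0)"
proof -
  have "(Li2 \<longlongrightarrow> 0) (at_right 0)"
    using isCont_Li2[of 0] by (metis abs_zero zero_less_one isCont_def Li2_0 filterlim_at_split)
  moreover have "((\<lambda>x::real. ln x * ln (1 - x)) \<longlongrightarrow> 0) (at_right 0)"
    by real_asymp
  ultimately have "((\<lambda>x. Li2 x + 1/2 * (ln x * ln (1 - x))) \<longlongrightarrow> 0 + 1/2 * 0) (at_right 0)"
    by (intro tendsto_intros)
  moreover have "\<forall>\<^sub>F x in at_right 0. Li2 x + 1/2 * (ln x * ln (1 - x)) = rogers_L x"
    using eventually_at_right_real[OF zero_less_one]
    by eventually_elim (auto simp: rogers_L_def)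
  ultimately show ?thesis
    using Lim_transform_eventually by fastforce
qed

lemma tendsto_rogers_L_0:
  assumes "(g \<longlongrightarrow> 0) F" "eventually (\<lambda>x. g x > 0) F"
  shows "((\<lambda>x. rogers_L (g x)) \<longlongrightarrow> 0) F"
  using filterlim_compose[OF rogers_L_tendsto_at_right_0 tendsto_imp_filterlim_at_right[OF assms]] .

section \<open>Five-term relation and reflection formula\<close>

lemma rogers_L_deriv_five_term:
  fixes x y :: real
  assumes x: "0 < x" "x < 1" and y: "0 < y" "y < 1"
  shows "rogers_L_deriv x - rogers_L_deriv (x*y) * y
         - rogers_L_deriv (x*(1-y)/(1-x*y)) * ((1-y)/(1-x*y)^2)
         - rogers_L_deriv (y*(1-x)/(1-x*y)) * (-y*(1-y)/(1-x*y)^2) = 0"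
proof -
  define uu vv ss where "uu = 1-x" and "vv = 1-y" and "ss = 1-x*y"
  have "x*y < 1" using mult_strict_mono[of x 1 y 1] x y by simp
  then have pos: "0 < uu" "0 < vv" "0 < ss" using x y by (auto simp: uu_def vv_def ss_def)
  then have nz: "x \<noteq> 0" "y \<noteq> 0" "uu \<noteq> 0" "vv \<noteq> 0" "ss \<noteq> 0" using x y by auto
  have e1: "1 - x * vv/ss = uu/ss" using nz by (simp add: field_simps uu_def vv_def ss_def)
  have e2: "1 - y * uu/ss = vv/ss" using nz by (simp add: field_simps uu_def vv_def ss_def)
  have e0: "1 - x*y = ss" "1 - x = uu" by (simp_all add: ss_def uu_def)
  have l1: "ln (x*y) = ln x + ln y" using x y by (simp add: ln_mult)
  have l2: "ln (uu/ss) = ln uu - ln ss" "ln (vv/ss) = ln vv - ln ss" using pos by (simp_all add: ln_div)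
  have l3: "ln (x * vv/ss) = ln x + ln vv - ln ss" "ln (y * uu/ss) = ln y + ln uu - ln ss"
    using x y pos by (simp_all add: ln_div ln_mult)
  have hx: "rogers_L_deriv x = -(ln uu/x + ln x/uu)/2"
    unfolding rogers_L_deriv_def e0 by simp
  have hxy: "rogers_L_deriv (x*y) * y = -(ln ss/x + y*(ln x + ln y)/ss)/2"
    unfolding rogers_L_deriv_def e0 l1 using nz by (simp add: field_simps)
  have hX: "rogers_L_deriv (x * vv/ss) * (vv/ss^2)
      = -((ln uu - ln ss)/(x * ss) + (ln x + ln vv - ln ss) * vv/(uu * ss))/2"
    unfolding rogers_L_deriv_def e1 l2 l3 using nz by (simp add: field_simps power2_eq_square)
  have hY: "rogers_L_deriv (y * uu/ss) * (-y * vv/ss^2)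
      = ((ln vv - ln ss) * vv/(uu * ss) + (ln y + ln uu - ln ss)*y/ss)/2"
    unfolding rogers_L_deriv_def e2 l2 l3 using nz by (simp add: field_simps power2_eq_square)
  txt \<open>After expanding, the logarithms enter linearly; each coefficient vanishes identically.\<close>
  have linear: "-(c/x + a/uu)/2 + (e/x + y*(a+b)/ss)/2 + ((c-e)/(x * ss) + (a+d-e) * vv/(uu * ss))/2
     - ((d-e) * vv/(uu * ss) + (b+c-e)*y/ss)/2 = 0" for a b c d e :: real
  proof -
    have "-(c/x + a/uu)/2 + (e/x + y*(a+b)/ss)/2 + ((c-e)/(x * ss) + (a+d-e) * vv/(uu * ss))/2
       - ((d-e) * vv/(uu * ss) + (b+c-e)*y/ss)/2
     = (c * uu * (1 - ss - x*y) + a * x * (vv + y * uu - ss) + e * uu * (ss - 1 + x*y)) / (2*x * uu * ss)"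
      using nz by (simp add: divide_simps) (simp add: algebra_simps)
    also have "\<dots> = 0" by (simp add: uu_def vv_def ss_def algebra_simps)
    finally show ?thesis .
  qed
  have "rogers_L_deriv x - rogers_L_deriv (x*y) * y - rogers_L_deriv (x * vv/ss) * (vv/ss^2)
      - rogers_L_deriv (y * uu/ss) * (-y * vv/ss^2) = 0"
    unfolding hx hxy hX hY
    using linear[where a="ln x" and b="ln y" and c="ln uu" and d="ln vv" and e="ln ss"]
    by linarith
  then show ?thesis by (simp add: uu_def vv_def ss_def)
qed

lemma five_term_tendsto_at_right_0:
  fixes y :: real
  assumes y: "0 < y" "y < 1"
  shows "((\<lambda>x. rogers_L x + rogers_L y - rogers_L (x*y)
           - rogers_L (x*(1-y)/(1-x*y)) - rogers_L (y*(1-x)/(1-x*y))) \<longlongrightarrow> 0) (at_right 0)"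
proof -
  have ev: "eventually (\<lambda>x. 0 < x \<and> x < 1) (at_right (0::real))"
    using eventually_at_right_real[OF zero_less_one] by (rule eventually_mono) auto
  have "((\<lambda>x. rogers_L (x*y)) \<longlongrightarrow> 0) (at_right 0)"
  proof (rule tendsto_rogers_L_0)
    have "((\<lambda>x. x*y) \<longlongrightarrow> 0*y) (at_right 0)"
      by (intro tendsto_intros)
    then show "((\<lambda>x. x*y) \<longlongrightarrow> 0) (at_right 0)" by simp
    show "eventually (\<lambda>x. x*y > 0) (at_right 0)"
      using ev by (rule eventually_mono) (use y in auto)
  qed
  moreover have "((\<lambda>x. rogers_L (x*(1-y)/(1-x*y))) \<longlongrightarrow> 0) (at_right 0)"
  proof (rule tendsto_rogers_L_0)
    have "((\<lambda>x. x*(1-y)/(1-x*y)) \<longlongrightarrow> 0*(1-y)/(1-0*y)) (at_right 0)"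
      by (intro tendsto_intros) simp
    then show "((\<lambda>x. x*(1-y)/(1-x*y)) \<longlongrightarrow> 0) (at_right 0)" by simp
    show "eventually (\<lambda>x. x*(1-y)/(1-x*y) > 0) (at_right 0)"
      using ev by (rule eventually_mono) (use y mult_strict_mono[of _ 1 y 1] in auto)
  qed
  moreover have "((\<lambda>x. rogers_L (y*(1-x)/(1-x*y)))
      \<longlongrightarrow> rogers_L (y*(1-0)/(1-0*y))) (at_right 0)"
    using y by (intro isCont_tendsto_compose[OF isCont_rogers_L] tendsto_intros) auto
  ultimately have "((\<lambda>x. rogers_L x + rogers_L y - rogers_L (x*y)
           - rogers_L (x*(1-y)/(1-x*y)) - rogers_L (y*(1-x)/(1-x*y)))
      \<longlongrightarrow> 0 + rogers_L y - 0 - 0 - rogers_L (y*(1-0)/(1-0*y))) (at_right 0)"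
    by (intro tendsto_diff tendsto_add tendsto_const rogers_L_tendsto_at_right_0)
  then show ?thesis by simp
qed

lemma zero_derivative_tendsto_at_right_imp_zero:
  fixes f :: "real \<Rightarrow> real"
  assumes deriv: "\<And>x. a < x \<Longrightarrow> x < b \<Longrightarrow> (f has_real_derivative 0) (at x)"
    and lim: "(f \<longlongrightarrow> 0) (at_right a)"
    and x: "a < x" "x < b"
  shows "f x = 0"
proof -
  have "(f has_real_derivative 0) (at x within {a<..<b})" if "x \<in> {a<..<b}" for x
    using deriv that by (simp add: has_field_derivative_at_within)
  then obtain c where c: "\<forall>x\<in>{a<..<b}. f x = c"
    using has_field_derivative_zero_constant[of "{a<..<b}" f] by auto
  have "a < b" using x by simp
  have "eventually (\<lambda>x. c = f x) (at_right a)"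
    using eventually_at_right_real[OF \<open>a < b\<close>] by (rule eventually_mono) (use c in auto)
  then have "(f \<longlongrightarrow> c) (at_right a)"
    by (rule Lim_transform_eventually[OF tendsto_const])
  with lim have "c = 0"
    using tendsto_unique[of "at_right a"] x by auto
  with c x show ?thesis by auto
qed

lemma rogers_L_five_term:
  fixes x y :: real
  assumes x: "0 < x" "x < 1" and y: "0 < y" "y < 1"
  shows "rogers_L (x*y) = rogers_L x + rogers_L y
           - rogers_L (x*(1-y)/(1-x*y)) - rogers_L (y*(1-x)/(1-x*y))"
proof -
  have "(\<lambda>x. rogers_L x + rogers_L y - rogers_L (x*y)
           - rogers_L (x*(1-y)/(1-x*y)) - rogers_L (y*(1-x)/(1-x*y))) x = 0"
  proof (rule zero_derivative_tendsto_at_right_imp_zero[OF _ five_term_tendsto_at_right_0[OF y] x])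
    fix x :: real assume x: "0 < x" "x < 1"
    have xy: "0 < x*y" "x*y < 1" using mult_strict_mono[of x 1 y 1] x y by simp_all
    then have d: "0 < 1 - x*y" by simp
    have X: "0 < x*(1-y)/(1-x*y)" "x*(1-y)/(1-x*y) < 1" using x y d by (auto simp: field_simps)
    have Y: "0 < y*(1-x)/(1-x*y)" "y*(1-x)/(1-x*y) < 1" using x y d by (auto simp: field_simps)
    have dX: "((\<lambda>x. x*(1-y)/(1-x*y)) has_real_derivative ((1-y)/(1-x*y)^2)) (at x)"
      using d by (auto intro!: derivative_eq_intros simp: field_simps power2_eq_square)
    have dY: "((\<lambda>x. y*(1-x)/(1-x*y)) has_real_derivative (-y*(1-y)/(1-x*y)^2)) (at x)"
      using d by (auto intro!: derivative_eq_intros simp: field_simps power2_eq_square)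
    have dxy: "((\<lambda>x. x*y) has_real_derivative y) (at x)"
      by (auto intro!: derivative_eq_intros)
    note L' = has_real_derivative_rogers_L
    have "((\<lambda>x. rogers_L x + rogers_L y - rogers_L (x*y)
           - rogers_L (x*(1-y)/(1-x*y)) - rogers_L (y*(1-x)/(1-x*y))) has_real_derivative
        rogers_L_deriv x + 0 - rogers_L_deriv (x*y) * y
        - rogers_L_deriv (x*(1-y)/(1-x*y)) * ((1-y)/(1-x*y)^2)
        - rogers_L_deriv (y*(1-x)/(1-x*y)) * (-y*(1-y)/(1-x*y)^2)) (at x)"
      by (intro DERIV_diff DERIV_add L' DERIV_const x xy X Y
          DERIV_chain2[OF L' dxy] DERIV_chain2[OF L' dX] DERIV_chain2[OF L' dY])
    also have "rogers_L_deriv x + 0 - rogers_L_deriv (x*y) * y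
        - rogers_L_deriv (x*(1-y)/(1-x*y)) * ((1-y)/(1-x*y)^2)
        - rogers_L_deriv (y*(1-x)/(1-x*y)) * (-y*(1-y)/(1-x*y)^2) = 0"
      using rogers_L_deriv_five_term[OF x y] by simp
    finally show "((\<lambda>x. rogers_L x + rogers_L y - rogers_L (x*y)
           - rogers_L (x*(1-y)/(1-x*y)) - rogers_L (y*(1-x)/(1-x*y))) has_real_derivative 0) (at x)" .
  qed
  then show ?thesis by simp
qed

lemma rogers_L_reflection:
  fixes x y :: real
  assumes "0 < x" "x < 1" "0 < y" "y < 1"
  shows "rogers_L x + rogers_L (1-x) = rogers_L y + rogers_L (1-y)"
proof -
  have "((\<lambda>x. rogers_L x + rogers_L (1-x)) has_real_derivative 0) (at x within {0<..<1})"
    if "x \<in> {0<..<1}" for x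
  proof -
    from that have x: "0 < x" "x < 1" by simp_all
    have "((\<lambda>x. 1 - x) has_real_derivative -1) (at x)"
      by (auto intro!: derivative_eq_intros)
    then have "((\<lambda>x. rogers_L x + rogers_L (1-x)) has_real_derivative
        rogers_L_deriv x + rogers_L_deriv (1-x) * (-1)) (at x)"
      using x by (intro DERIV_add has_real_derivative_rogers_L
          DERIV_chain2[OF has_real_derivative_rogers_L]) auto
    also have "rogers_L_deriv x + rogers_L_deriv (1-x) * (-1) = 0"
      unfolding rogers_L_deriv_def by simp
    finally show ?thesis by (rule has_field_derivative_at_within)
  qed
  then obtain c where "\<forall>x\<in>{0<..<1}. rogers_L x + rogers_L (1-x) = c"
    using has_field_derivative_zero_constant[of "{0<..<1::real}" "\<lambda>x. rogers_L x + rogers_L (1-x)"]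
    by auto
  then show ?thesis using assms by auto
qed

section \<open>The telescoping series\<close>

definition x_seq :: "real \<Rightarrow> nat \<Rightarrow> real" where
  "x_seq q m = q^m * (q - 1) / (q * (q^m - 1))"

definition y_seq :: "real \<Rightarrow> nat \<Rightarrow> real" where
  "y_seq q m = (q - 1) / (q^m - 1)"

definition t_seq :: "real \<Rightarrow> nat \<Rightarrow> real" where
  "t_seq q m = q^m * (q - 1)^2 / (q * (q^m - 1)^2)"

lemma rogers_L_t_seq_telescope:
  assumes q: "q > 1" and m: "m \<ge> 2"
  shows "rogers_L (t_seq q m) = (rogers_L (x_seq q m) + rogers_L (y_seq q m))
           - (rogers_L (x_seq q (Suc m)) + rogers_L (y_seq q (Suc m)))"
proof -
  define Q where "Q = q^m"
  have "q^1 < q^m" using q m by (intro power_strict_increasing) auto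
  then have Qq: "Q > q" by (simp add: Q_def)
  then have Q1: "Q > 1" using q by simp
  have qQ: "q * Q > 1" using q Q1 less_1_mult by blast
  have x: "0 < x_seq q m" "x_seq q m < 1" and y: "0 < y_seq q m" "y_seq q m < 1"
    using q Qq Q1 unfolding x_seq_def y_seq_def Q_def[symmetric] by (auto simp: field_simps)
  define a1 a2 a3 where "a1 = Q - 1" and "a2 = q*Q - 1" and "a3 = Q - q"
  have nz: "q \<noteq> 0" "a1 \<noteq> 0" "a2 \<noteq> 0" "a3 \<noteq> 0"
    using q Q1 Qq qQ by (auto simp: a1_def a2_def a3_def)
  have X: "x_seq q m = Q*(q-1)/(q*a1)" and X': "x_seq q (Suc m) = Q*(q-1)/a2"
    unfolding x_seq_def Q_def a1_def a2_def using nz(1) by simp_all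
  have Y: "y_seq q m = (q-1)/a1" and Y': "y_seq q (Suc m) = (q-1)/a2"
    unfolding y_seq_def Q_def a1_def a2_def by simp_all
  have oY: "1 - y_seq q m = a3/a1"
    unfolding Y using nz by (simp add: divide_simps) (simp add: a1_def a3_def)
  have oX: "1 - x_seq q m = a3/(q*a1)"
    unfolding X using nz by (simp add: divide_simps) (simp add: a1_def a3_def algebra_simps)
  have d: "1 - x_seq q m * y_seq q m = a3*a2/(q*a1^2)"
    unfolding X Y using nz
    by (simp add: divide_simps) (simp add: a1_def a2_def a3_def algebra_simps power2_eq_square)
  have "x_seq q m * y_seq q m = t_seq q m"
    unfolding X Y t_seq_def Q_def[symmetric] a1_def[symmetric] using nz
    by (simp add: field_simps power2_eq_square)
  moreover have "x_seq q m * (1 - y_seq q m) / (1 - x_seq q m * y_seq q m) = x_seq q (Suc m)"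
    unfolding d oY X' unfolding X using nz by (simp add: field_simps power2_eq_square)
  moreover have "y_seq q m * (1 - x_seq q m) / (1 - x_seq q m * y_seq q m) = y_seq q (Suc m)"
    unfolding d oX Y' unfolding Y using nz by (simp add: field_simps power2_eq_square)
  ultimately show ?thesis
    using rogers_L_five_term[OF x y] by simp
qed

lemma x_seq_tendsto:
  assumes q: "q > 1"
  shows "x_seq q \<longlonglongrightarrow> (q - 1) / q"
proof -
  have "eventually (\<lambda>m. (q - 1) / (q * (1 - (1/q)^m)) = x_seq q m) sequentially"
  proof (rule eventually_mono[OF eventually_gt_at_top[of 0]])
    fix m :: nat assume "m > 0"
    then show "(q - 1) / (q * (1 - (1/q)^m)) = x_seq q m"
      using q one_less_power[OF q \<open>m > 0\<close>] by (simp add: x_seq_def field_simps power_one_over)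
  qed
  moreover have "(\<lambda>m. (q - 1) / (q * (1 - (1/q)^m))) \<longlonglongrightarrow> (q - 1) / (q * (1 - 0))"
    using q by (intro tendsto_intros LIMSEQ_power_zero) auto
  ultimately show ?thesis
    using Lim_transform_eventually by fastforce
qed

lemma y_seq_tendsto:
  assumes q: "q > 1"
  shows "y_seq q \<longlonglongrightarrow> 0"
proof -
  have "eventually (\<lambda>m. (q - 1) * (1/q)^m / (1 - (1/q)^m) = y_seq q m) sequentially"
  proof (rule eventually_mono[OF eventually_gt_at_top[of 0]])
    fix m :: nat assume "m > 0"
    then have "q^m > 1" using q by (simp add: one_less_power)
    then show "(q - 1) * (1/q)^m / (1 - (1/q)^m) = y_seq q m"
      unfolding y_seq_def power_one_over using q by (simp add: divide_simps)
  qed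
  moreover have "(\<lambda>m. (q - 1) * (1/q)^m / (1 - (1/q)^m)) \<longlonglongrightarrow> (q - 1) * 0 / (1 - 0)"
    using q by (intro tendsto_intros LIMSEQ_power_zero) auto
  ultimately show ?thesis
    using Lim_transform_eventually by fastforce
qed

lemma sums_rogers_L_t_seq:
  assumes q: "q > 1"
  shows "(\<lambda>m. rogers_L (t_seq q (m + 2))) sums rogers_L (1 / q)"
proof -
  define g where "g m = rogers_L (x_seq q (m + 2)) + rogers_L (y_seq q (m + 2))" for m
  have "(\<lambda>m. rogers_L (x_seq q m)) \<longlonglongrightarrow> rogers_L ((q - 1) / q)"
    using q by (intro isCont_tendsto_compose[OF isCont_rogers_L] x_seq_tendsto) auto
  moreover have "(\<lambda>m. rogers_L (y_seq q m)) \<longlonglongrightarrow> 0"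
  proof (rule tendsto_rogers_L_0[OF y_seq_tendsto[OF q]])
    show "eventually (\<lambda>m. y_seq q m > 0) sequentially"
      using eventually_gt_at_top[of 0]
      by (rule eventually_mono) (use q one_less_power[OF q] in \<open>auto simp: y_seq_def\<close>)
  qed
  ultimately have "(\<lambda>m. rogers_L (x_seq q m) + rogers_L (y_seq q m))
      \<longlonglongrightarrow> rogers_L ((q - 1) / q)"
    using tendsto_add by fastforce
  then have "g \<longlonglongrightarrow> rogers_L ((q - 1) / q)"
    unfolding g_def by (rule LIMSEQ_ignore_initial_segment)
  then have "(\<lambda>m. g m - g (Suc m)) sums (g 0 - rogers_L ((q - 1) / q))"
    by (rule telescope_sums')
  moreover have "g m - g (Suc m) = rogers_L (t_seq q (m + 2))" for m
    using rogers_L_t_seq_telescope[OF q, of "m + 2"] by (simp add: g_def)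
  moreover have "g 0 - rogers_L ((q - 1) / q) = rogers_L (1 / q)"
  proof -
    have sq: "q^2 - 1 = (q - 1) * (q + 1)" by (simp add: algebra_simps power2_eq_square)
    have "q * q > 1" using q less_1_mult by blast
    then have x2: "x_seq q 2 = 1 - 1 / (q + 1)" and y2: "y_seq q 2 = 1 / (q + 1)"
      using q unfolding x_seq_def y_seq_def sq
      by (simp_all add: divide_simps, simp add: algebra_simps power2_eq_square)
    have "rogers_L (1 / (q + 1)) + rogers_L (1 - 1 / (q + 1)) = rogers_L (1 / q) + rogers_L (1 - 1 / q)"
      using q by (intro rogers_L_reflection) (auto simp: field_simps)
    moreover have "1 - 1 / q = (q - 1) / q" using q by (simp add: field_simps)
    moreover have "g 0 = rogers_L (x_seq q 2) + rogers_L (y_seq q 2)"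
      unfolding g_def by (simp only: add_0)
    ultimately show ?thesis
      unfolding x2 y2 by simp
  qed
  ultimately show ?thesis by simp
qed

lemma sums_rogers_L_t_seq_pairs:
  assumes "q > 1"
  shows "(\<lambda>j. rogers_L (t_seq q (2*j + 2)) + rogers_L (t_seq q (2*j + 3))) sums rogers_L (1 / q)"
  using sums_group[OF sums_rogers_L_t_seq[OF assms], of 2]
  by (simp add: mult.commute numeral_3_eq_3)

section \<open>Powers of a + b sqrt N\<close>

lemma sqrt_nonsquare_irrational:
  assumes "\<not> (\<exists>m::nat. m^2 = n)"
  shows "sqrt (real n) \<notin> \<rat>"
proof
  assume "sqrt (real n) \<in> \<rat>"
  then obtain p r :: int where r: "r > 0" "coprime p r" "sqrt (real n) = of_int p / of_int r"
    by (rule Rats_cases')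
  have "real n = (of_int p)^2 / (of_int r)^2"
    using arg_cong[OF r(3), of "\<lambda>x. x^2"] by (simp add: power_divide)
  then have "of_int (int n * r^2) = (of_int (p^2) :: real)"
    using r(1) by (simp add: field_simps)
  then have eq: "int n * r^2 = p^2"
    by (simp only: of_int_eq_iff)
  then have "r^2 dvd p^2" by (metis dvd_triv_right)
  moreover have "coprime (r^2) (p^2)" using r(2) by (simp add: coprime_commute)
  ultimately have "is_unit (r^2)" using coprime_absorb_left by blast
  then have "r = 1" using r(1) by (auto simp: is_unit_power_iff power2_eq_1_iff)
  then have "int ((nat \<bar>p\<bar>)^2) = int n" using eq by simp
  then have "(nat \<bar>p\<bar>)^2 = n" by (simp only: of_nat_eq_iff)
  with assms show False by blast
qed

lemma of_rat_add_mult_irrational_eq_iff: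
  fixes s :: real
  assumes "s \<notin> \<rat>"
  shows "of_rat p + of_rat q * s = of_rat p' + of_rat q' * s \<longleftrightarrow> p = p' \<and> q = q'"
proof
  assume eq: "of_rat p + of_rat q * s = of_rat p' + of_rat q' * s"
  have "q = q'"
  proof (rule ccontr)
    assume "q \<noteq> q'"
    with eq have "s = of_rat ((p' - p) / (q - q'))"
      by (simp add: of_rat_diff of_rat_divide field_simps)
    with assms show False by simp
  qed
  with eq show "p = p' \<and> q = q'" by simp
qed simp

fun quad_pow :: "'a::comm_semiring_1 \<Rightarrow> 'a \<Rightarrow> 'a \<Rightarrow> nat \<Rightarrow> 'a \<times> 'a" where
  "quad_pow a b N 0 = (1, 0)"
| "quad_pow a b N (Suc k) =
     (a * fst (quad_pow a b N k) + N * b * snd (quad_pow a b N k),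
      a * snd (quad_pow a b N k) + b * fst (quad_pow a b N k))"

lemma quad_pow_eq:
  fixes a b s :: "'a::comm_ring_1"
  assumes "s * s = N"
  shows "(a + b * s)^k = fst (quad_pow a b N k) + snd (quad_pow a b N k) * s"
proof (induction k)
  case (Suc k)
  have "(a + b * s) * (fst (quad_pow a b N k) + snd (quad_pow a b N k) * s)
      = a * fst (quad_pow a b N k) + b * snd (quad_pow a b N k) * (s * s)
        + (a * snd (quad_pow a b N k) + b * fst (quad_pow a b N k)) * s"
    by (simp add: algebra_simps)
  with Suc show ?case
    using assms by (simp add: algebra_simps)
qed simp

lemma quad_pow_conj_eq:
  fixes a b s :: "'a::comm_ring_1"
  assumes "s * s = N"
  shows "(a - b * s)^k = fst (quad_pow a b N k) - snd (quad_pow a b N k) * s"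
  using quad_pow_eq[of "-s" N a b k] assms by simp

lemma quad_pow_of_int:
  "quad_pow (of_int a) (of_int b) (of_int N) k
     = map_prod of_int of_int (quad_pow a b N k)"
  by (induction k) auto

lemma quad_pow_of_rat:
  "quad_pow (of_rat a) (of_rat b) (of_rat N) k
     = map_prod of_rat of_rat (quad_pow a b N k)"
  by (induction k) (auto simp: of_rat_add of_rat_mult)

lemma quad_pow_dvd:
  "a dvd snd (quad_pow a b N (2*k)) \<and> a dvd fst (quad_pow a b N (2*k + 1))"
proof (induction k)
  case (Suc k)
  have "a dvd snd (quad_pow a b N (2 * Suc k))"
    using Suc by (simp add: mult_2)
  then show ?case
    by (simp add: mult_2)
qed simp

lemma quad_pow_div_Ints:
  fixes a b N :: "'a::field_char_0"
  assumes "a \<in> \<int>" "b \<in> \<int>" "N \<in> \<int>"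
  shows "snd (quad_pow a b N (2*k)) / a \<in> \<int> \<and> fst (quad_pow a b N (2*k + 1)) / a \<in> \<int>"
proof -
  obtain a' b' N' where ints: "a = of_int a'" "b = of_int b'" "N = of_int N'"
    using assms by (metis Ints_cases)
  obtain c d where "snd (quad_pow a' b' N' (2*k)) = a' * c" "fst (quad_pow a' b' N' (2*k + 1)) = a' * d"
    using quad_pow_dvd by (metis dvdE)
  then have "snd (quad_pow a b N (2*k)) / a = of_int c \<or> a = 0"
        and "fst (quad_pow a b N (2*k + 1)) / a = of_int d \<or> a = 0"
    unfolding ints quad_pow_of_int by auto
  then show ?thesis by auto
qed

lemma quad_pow_coeffs_unique:
  fixes a b N p q :: rat and s :: real
  assumes "s \<notin> \<rat>" "s * s = of_rat N"
    and "(of_rat a + of_rat b * s)^k = of_rat p + of_rat q * s"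
  shows "p = fst (quad_pow a b N k) \<and> q = snd (quad_pow a b N k)"
proof -
  have "of_rat p + of_rat q * s
      = of_rat (fst (quad_pow a b N k)) + of_rat (snd (quad_pow a b N k)) * s"
    using assms(3) quad_pow_eq[OF assms(2), of "of_rat a" "of_rat b" k]
    by (simp add: quad_pow_of_rat)
  then show ?thesis
    using of_rat_add_mult_irrational_eq_iff[OF assms(1)] by blast
qed

lemma pell_unit:
  fixes a b s N :: real
  assumes "s * s = N" "s \<ge> 0" "a > 0" "b > 0" "a^2 - N * b^2 = -1"
  shows "a + b * s > 1" and "a - b * s = - 1 / (a + b * s)"
proof -
  have pos: "a + b * s > 0" using assms by (simp add: add_pos_nonneg)
  have "(a + b * s) * (a - b * s) = -1"
    using assms by (simp add: algebra_simps power2_eq_square)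
  then show conj: "a - b * s = - 1 / (a + b * s)"
    using pos by (simp add: field_simps)
  have "1 / (a + b * s) < a + b * s"
    using conj \<open>a > 0\<close> by linarith
  then have "(a + b * s)^2 > 1"
    using pos by (simp add: divide_less_eq power2_eq_square)
  then show "a + b * s > 1"
    using pos by (simp add: power2_gt_1_iff)
qed

lemma t_seq_square:
  fixes u :: real
  assumes u: "u > 1" and m: "m \<ge> 1"
  shows "t_seq (u^2) m = (u - 1/u)^2 / (u^m - 1/u^m)^2"
proof -
  have c: "u^m > 1" using u m by simp
  have e: "(u^2)^m = (u^m)^2"
    by (simp add: power_mult[symmetric] mult.commute)
  have e1: "u - 1/u = (u^2 - 1) / u" and e2: "u^m - 1/u^m = ((u^m)^2 - 1) / u^m"
    using u c by (simp_all add: field_simps power2_eq_square)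
  have "(u^m)^2 \<noteq> 1" using c by (simp add: power2_eq_1_iff)
  then show ?thesis
    unfolding t_seq_def e e1 e2 using u c by (simp add: power_divide field_simps)
qed

lemma pell_quad_pow_ratios:
  fixes a b s N :: real
  assumes s: "s * s = N" "s \<ge> 0" and ab: "a > 0" "b > 0" and pell: "a^2 - N * b^2 = -1"
    and m: "m \<ge> 1"
  defines "u \<equiv> a + b * s"
  shows "even m \<Longrightarrow> 1 / (N * (snd (quad_pow a b N m) / a)^2) = t_seq (u^2) m"
    and "odd m \<Longrightarrow> 1 / (fst (quad_pow a b N m) / a)^2 = t_seq (u^2) m"
proof -
  have u: "u > 1" and conj: "a - b * s = - 1 / u"
    using pell_unit[OF s ab pell] by (simp_all add: u_def)
  have "(-1 / u)^m = (-1)^m / u^m" by (rule power_divide)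
  then have P: "2 * fst (quad_pow a b N m) = u^m + (-1)^m / u^m"
        and Q: "2 * (snd (quad_pow a b N m) * s) = u^m - (-1)^m / u^m"
    using quad_pow_eq[OF s(1), of a b m] quad_pow_conj_eq[OF s(1), of a b m] conj
    by (simp_all add: u_def)
  have a: "2 * a = u - 1/u"
    using conj by (simp add: u_def)
  show "1 / (N * (snd (quad_pow a b N m) / a)^2) = t_seq (u^2) m" if "even m"
  proof -
    have "N * (snd (quad_pow a b N m) / a)^2 = (2 * (snd (quad_pow a b N m) * s))^2 / (2 * a)^2"
      using ab s(1) by (simp add: power_divide power_mult_distrib power2_eq_square)
    with that show ?thesis
      unfolding Q a t_seq_square[OF u m] by (simp add: power_divide)
  qed
  show "1 / (fst (quad_pow a b N m) / a)^2 = t_seq (u^2) m" if "odd m"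
  proof -
    have "fst (quad_pow a b N m) / a = (2 * fst (quad_pow a b N m)) / (2 * a)"
      by simp
    with that show ?thesis
      unfolding P a t_seq_square[OF u m] by (simp add: power_divide)
  qed
qed

theorem theorem3:
  fixes n :: nat and a b :: rat and A B :: "nat \<Rightarrow> rat"
  assumes "n \<ge> 2"
    and "\<not> (\<exists>m::nat. m^2 = n)"
    and "a > 0" and "b > 0"
    and "a^2 - of_nat n * b^2 = -1"
    and "\<And>k. k \<ge> 1 \<Longrightarrow>
           (of_rat a + of_rat b * sqrt (real n)) ^ k
             = of_rat (A k) + of_rat (B k) * sqrt (real n)"
  shows "((\<lambda>j. let k = Suc j in
            rogers_L (1 / (real n * (of_rat (B (2*k) / a))^2))
          + rogers_L (1 / (of_rat (A (2*k+1) / a))^2))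
         sums rogers_L (1 / (of_rat a + of_rat b * sqrt (real n))^2))
         \<and> ((a \<in> \<int> \<and> b \<in> \<int>) \<longrightarrow>
           (\<forall>k\<ge>1. B (2*k) / a \<in> \<int> \<and> A (2*k+1) / a \<in> \<int>))"
proof -
  let ?s = "sqrt (real n)"
  let ?u = "of_rat a + of_rat b * ?s"
  have s: "?s * ?s = real n" "?s \<ge> 0" by simp_all
  have ab: "(of_rat a :: real) > 0" "(of_rat b :: real) > 0" using assms(3,4) by simp_all
  have pell: "(of_rat a)^2 - real n * (of_rat b)^2 = (-1 :: real)"
    using arg_cong[OF assms(5), of "of_rat :: rat \<Rightarrow> real"]
    by (simp add: of_rat_diff of_rat_mult of_rat_power)
  have coeffs: "A k = fst (quad_pow a b (of_nat n) k) \<and> B k = snd (quad_pow a b (of_nat n) k)"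
    if "k \<ge> 1" for k
    using quad_pow_coeffs_unique[OF sqrt_nonsquare_irrational[OF assms(2)] _ assms(6)[OF that]]
    by simp
  have even_terms: "1 / (real n * (of_rat (B m / a))^2) = t_seq (?u^2) m"
    if "m \<ge> 1" "even m" for m
    using coeffs[OF that(1)] pell_quad_pow_ratios(1)[OF s ab pell that]
    by (simp add: quad_pow_of_rat[of a b "of_nat n", simplified] of_rat_divide)
  have odd_terms: "1 / (of_rat (A m / a))^2 = t_seq (?u^2) m"
    if "m \<ge> 1" "odd m" for m
    using coeffs[OF that(1)] pell_quad_pow_ratios(2)[OF s ab pell that]
    by (simp add: quad_pow_of_rat[of a b "of_nat n", simplified] of_rat_divide)
  have "(\<lambda>j. let k = Suc j in
            rogers_L (1 / (real n * (of_rat (B (2*k) / a))^2))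
          + rogers_L (1 / (of_rat (A (2*k+1) / a))^2))
      = (\<lambda>j. rogers_L (t_seq (?u^2) (2*j + 2)) + rogers_L (t_seq (?u^2) (2*j + 3)))"
    using even_terms[of "2 * Suc _"] odd_terms[of "2 * Suc _ + 1"] by (simp add: numeral_3_eq_3)
  moreover have "?u^2 > 1"
    using pell_unit(1)[OF s ab pell] by simp
  moreover have "snd (quad_pow a b (of_nat n) (2*k)) / a \<in> \<int>
      \<and> fst (quad_pow a b (of_nat n) (2*k + 1)) / a \<in> \<int>"
    if "a \<in> \<int>" "b \<in> \<int>" for k
    using quad_pow_div_Ints[OF that] by simp
  ultimately show ?thesis
    using sums_rogers_L_t_seq_pairs coeffs by (simp add: power_one_over)
qed

end
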